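(* Let $s,t,q,N$ be integers with $0\le s<q$, $1\le t<q$, $N\ge0$, $t\nmid q$ and $\gcd(t,q)=1$. Write $q=\overline qt+\widehat q$ ($1\le\widehat q<t$), $s=\overline st+\widehat s$ ($0\le\widehat s<t$). Let $S^-(s,t,q,N)=\sum_{k=0}^N\lfloor(s-kt)/q\rfloor$, $M=-\lfloor(s-Nt)/q\rfloor$, $x_M=(s+(M-1)q)/t$ and $S=-\overline q\frac{(M-1)M}2-M(N-\lfloor x_M\rfloor)$. Let $H=\{k\in\mathbb N:(\widehat s+k\widehat q)\bmod t<\widehat q\}$, $J=H\cap\{0,\dots,t-1\}=\{j_0<\dots<j_{\widehat q-1}\}$, and $S_K=\sum_{k\in K}k$. Then: (a) if $j_0\ge M$, $S^-(s,t,q,N)=S$; (b.1) if $j_0<M\le j_{\widehat q-1}$, $S^-(s,t,q,N)=S-S_K$ with $K=H\cap\{0,\dots,M-1\}$; (b.2) if $j_{\widehat q-1}<M$ and $j_0+t\ge M$, $S^-(s,t,q,N)=S-S_J$; (b.3) if $j_{\widehat q-1}<M$ and $j_0+t<M$, with $u=\lfloor(M-1)/t\rfloor$ and $K=H\cap\{ut,\dots,M-1\}$, $S^-(s,t,q,N)=S-uS_J-\widehat q\,t\frac{(u-1)u}2-S_K$.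
   Context: Here $r\bmod t$ denotes the representative of $r$ in $\{0,\dots,t-1\}$. *)

theory Defs
  imports Complex_Main
begin

definition Sminus :: "int \<Rightarrow> int \<Rightarrow> int \<Rightarrow> int \<Rightarrow> int" where
  "Sminus s t q N = (\<Sum>k\<in>{0..N}. (s - k * t) div q)"

definition Hset :: "int \<Rightarrow> int \<Rightarrow> int \<Rightarrow> nat set" where
  "Hset s t q = {k::nat. (s mod t + int k * (q mod t)) mod t < q mod t}"

definition Jset :: "int \<Rightarrow> int \<Rightarrow> int \<Rightarrow> nat set" where
  "Jset s t q = Hset s t q \<inter> {0..<nat t}"

end

theory Submission
  imports Defs
begin

(* Counting the lattice points under the line in the other direction turns S^-(s,t,q,N) into
   - sum_{i<M} (N - floor((s + i q)/t)).  Consecutive values floor((s + i q)/t) differ by qbar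
   plus a carry, and the carry happens exactly at the indices i in H; summing by parts gives
   S^- = S - sum_{k in H, k < M} k.  Finally H is t-periodic with exactly qhat elements per period
   (q is a unit mod t), which evaluates this sum in each of the four ranges of M. *)

lemma Sminus_Suc:
  "Sminus s t q (int (Suc n)) = Sminus s t q (int n) + (s - int (Suc n) * t) div q"
proof -
  have "{0..int (Suc n)} = insert (int (Suc n)) {0..int n}" by auto
  then show ?thesis unfolding Sminus_def by simp
qed

lemma div_diff_le_divisor_cases:
  fixes a t q :: int
  assumes "0 < t" "t \<le> q"
  shows "(a - t) div q = a div q \<or> ((a - t) div q = a div q - 1 \<and> a mod q < t)"
proof (cases "t \<le> a mod q")
  case True
  have "a mod q < q" using assms by simp
  have "a - t = q * (a div q) + (a mod q - t)" by simp
  then have "(a - t) div q = a div q"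
    using True assms \<open>a mod q < q\<close> by (intro int_div_pos_eq[where r = "a mod q - t"]) auto
  then show ?thesis by simp
next
  case False
  have "0 \<le> a mod q" using assms by simp
  have "a - t = q * (a div q - 1) + (a mod q - t + q)" by (simp add: algebra_simps)
  then have "(a - t) div q = a div q - 1"
    using False assms \<open>0 \<le> a mod q\<close> by (intro int_div_pos_eq[where r = "a mod q - t + q"]) auto
  with False show ?thesis by simp
qed

lemma Sminus_eq_column_sum:
  fixes s t q :: int
  assumes "0 \<le> s" "s < q" "1 \<le> t" "t \<le> q"
  shows "Sminus s t q (int n)
           = - (\<Sum>i\<in>{0..<- ((s - int n * t) div q)}. int n - (s + i * q) div t)"
proof (induction n)
  case 0
  show ?case using assms by (simp add: Sminus_def div_pos_pos_trivial)
next
  case (Suc n)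
  define a where "a = s - int n * t"
  define M where "M = - (a div q)"
  let ?c = "\<lambda>i. (s + i * q) div t"
  have "a \<le> s" using assms by (simp add: a_def)
  then have "a div q \<le> s div q" by (rule zdiv_mono1) (use assms in simp)
  also have "s div q = 0" using assms by (simp add: div_pos_pos_trivial)
  finally have "M \<ge> 0" by (simp add: M_def)
  have step: "s - int (Suc n) * t = a - t" by (simp add: a_def algebra_simps)
  have "(\<Sum>i\<in>{0..<M}. int (Suc n) - ?c i) = (\<Sum>i\<in>{0..<M}. (int n - ?c i) + 1)"
    by (simp add: algebra_simps)
  also have "\<dots> = (\<Sum>i\<in>{0..<M}. int n - ?c i) + M"
    using \<open>M \<ge> 0\<close> by (simp add: sum.distrib)
  finally have shift: "(\<Sum>i\<in>{0..<M}. int (Suc n) - ?c i) = (\<Sum>i\<in>{0..<M}. int n - ?c i) + M" .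
  have rec: "Sminus s t q (int (Suc n)) = - (\<Sum>i\<in>{0..<M}. int n - ?c i) + (a - t) div q"
    using Suc.IH by (simp only: Sminus_Suc step a_def M_def)
  consider "(a - t) div q = a div q" | "(a - t) div q = a div q - 1" "a mod q < t"
    using div_diff_le_divisor_cases[of t q a] assms by fastforce
  then have "Sminus s t q (int (Suc n)) = - (\<Sum>i\<in>{0..<- ((a - t) div q)}. int (Suc n) - ?c i)"
  proof cases
    case 1
    then show ?thesis using rec shift by (simp add: M_def)
  next
    case 2
    \<comment> \<open>the row \<open>k = n + 1\<close> adds the column \<open>i = M\<close>, on which \<open>(s + M q) div t = n\<close>\<close>
    have "s + M * q = int n * t + a mod q"
      by (simp add: M_def a_def algebra_simps minus_mult_div_eq_mod[symmetric])
    then have "?c M = int n"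
      using 2 assms by (intro int_div_pos_eq[where r = "a mod q"]) (auto simp: mult.commute)
    moreover have "{0..<M + 1} = insert M {0..<M}" using \<open>M \<ge> 0\<close> by auto
    ultimately show ?thesis using 2 rec shift by (simp add: M_def)
  qed
  then show ?case by (simp only: step)
qed

lemma div_add_eq_carry:
  fixes a b t :: int
  assumes "0 < t"
  shows "(a + b) div t = a div t + b div t + (if (a + b) mod t < b mod t then 1 else 0)"
proof -
  let ?r = "a mod t" and ?h = "b mod t"
  have bounds: "0 \<le> ?r" "?r < t" "0 \<le> ?h" "?h < t" using assms by simp_all
  have carry: "(?r + ?h) div t = (if (?r + ?h) mod t < ?h then 1 else 0)"
  proof (cases "?r + ?h < t")
    case True
    have "(?r + ?h) div t = 0"
      by (intro int_div_pos_eq[where r = "?r + ?h"]) (use True bounds in linarith)+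
    moreover have "(?r + ?h) mod t = ?r + ?h"
      by (intro int_mod_pos_eq[where q = 0]) (use True bounds in linarith)+
    ultimately show ?thesis using bounds(1) by (simp add: not_less)
  next
    case False
    have "(?r + ?h) div t = 1"
      by (intro int_div_pos_eq[where r = "?r + ?h - t"]) (use False bounds in linarith)+
    moreover have "(?r + ?h) mod t = ?r + ?h - t"
      by (intro int_mod_pos_eq[where q = 1]) (use False bounds in linarith)+
    ultimately show ?thesis using bounds(2) by simp
  qed
  have "(?r + ?h) mod t = (a + b) mod t" by (simp add: mod_add_eq)
  moreover have "(a + b) div t = a div t + b div t + (?r + ?h) div t" by (rule div_add1_eq)
  ultimately show ?thesis using carry by simp
qed

lemma Hset_iff: "k \<in> Hset s t q \<longleftrightarrow> (s + int k * q) mod t < q mod t"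
proof -
  have "(s mod t + int k * (q mod t)) mod t = (s + int k * q) mod t"
    by (metis mod_add_left_eq mod_add_right_eq mod_mult_right_eq)
  then show ?thesis unfolding Hset_def by simp
qed

lemma div_step_Hset:
  fixes s t q :: int
  assumes "0 < t"
  shows "(s + int m * q) div t
           = (s + (int m - 1) * q) div t + q div t + (if m \<in> Hset s t q then 1 else 0)"
proof -
  have split: "s + int m * q = (s + (int m - 1) * q) + q" by (simp add: algebra_simps)
  show ?thesis unfolding Hset_iff split by (rule div_add_eq_carry[OF assms])
qed

lemma triangle_step:
  fixes m :: int
  shows "((m + 1) * m) div 2 = (m * (m - 1)) div 2 + m"
proof -
  have "(m + 1) * m = m * (m - 1) + m * 2" by (simp add: algebra_simps)
  then show ?thesis by simp
qed

lemma sum_div_telescope: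
  fixes s t q :: int
  assumes "0 < t"
  shows "int m * ((s + (int m - 1) * q) div t) - (\<Sum>i\<in>{0..<int m}. (s + i * q) div t)
       = q div t * ((int m * (int m - 1)) div 2) + (\<Sum>k\<in>{k\<in>Hset s t q. k < m}. int k)"
proof (induction m)
  case 0
  then show ?case by simp
next
  case (Suc m)
  let ?c = "\<lambda>i. (s + i * q) div t"
  let ?H = "Hset s t q"
  have "{k\<in>?H. k < Suc m} = {k\<in>?H. k < m} \<union> (if m \<in> ?H then {m} else {})"
    by (auto simp: less_Suc_eq)
  then have H_Suc: "(\<Sum>k\<in>{k\<in>?H. k < Suc m}. int k)
                    = (\<Sum>k\<in>{k\<in>?H. k < m}. int k) + (if m \<in> ?H then int m else 0)"
    by (simp add: sum.union_disjoint)
  have "{0..<int (Suc m)} = insert (int m) {0..<int m}" by auto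
  then have "int (Suc m) * ?c (int (Suc m) - 1) - (\<Sum>i\<in>{0..<int (Suc m)}. ?c i)
      = (int m * ?c (int m - 1) - (\<Sum>i\<in>{0..<int m}. ?c i)) + int m * (?c (int m) - ?c (int m - 1))"
    by (simp add: algebra_simps)
  also have "\<dots> = q div t * ((int m * (int m - 1)) div 2) + (\<Sum>k\<in>{k\<in>?H. k < m}. int k)
      + int m * (q div t) + (if m \<in> ?H then int m else 0)"
    using Suc.IH div_step_Hset[OF assms, of s m q] by (simp add: algebra_simps)
  also have "\<dots> = q div t * ((int (Suc m) * (int (Suc m) - 1)) div 2) + (\<Sum>k\<in>{k\<in>?H. k < Suc m}. int k)"
    using triangle_step[of "int m"] H_Suc by (simp add: algebra_simps)
  finally show ?case .
qed

lemma Sminus_eq_Hset_sum: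
  fixes s t q N :: int
  assumes "0 \<le> s" "s < q" "1 \<le> t" "t \<le> q" "N \<ge> 0"
  defines "M \<equiv> - ((s - N * t) div q)"
  shows "Sminus s t q N = - (q div t) * (((M - 1) * M) div 2)
           - M * (N - \<lfloor>(of_int (s + (M - 1) * q) :: real) / of_int t\<rfloor>)
           - (\<Sum>k\<in>{k\<in>Hset s t q. int k \<le> M - 1}. int k)"
proof -
  let ?c = "\<lambda>i. (s + i * q) div t"
  obtain n where n: "N = int n" using \<open>N \<ge> 0\<close> nonneg_int_cases by blast
  have "s - N * t \<le> s" using assms by simp
  then have "(s - N * t) div q \<le> s div q" by (rule zdiv_mono1) (use assms in simp)
  also have "s div q = 0" using assms by (simp add: div_pos_pos_trivial)
  finally have "M \<ge> 0" by (simp add: M_def)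
  then obtain m where m: "M = int m" using nonneg_int_cases by blast
  have "Sminus s t q N = - (\<Sum>i\<in>{0..<M}. N - ?c i)"
    using Sminus_eq_column_sum[OF assms(1-4), of n] by (simp add: n M_def)
  also have "(\<Sum>i\<in>{0..<M}. N - ?c i) = M * N - (\<Sum>i\<in>{0..<M}. ?c i)"
    using \<open>M \<ge> 0\<close> by (simp add: sum_subtractf)
  also have "(\<Sum>i\<in>{0..<M}. ?c i)
      = M * ?c (M - 1) - q div t * ((M * (M - 1)) div 2) - (\<Sum>k\<in>{k\<in>Hset s t q. k < m}. int k)"
    using sum_div_telescope[where m = m and s = s and t = t and q = q] assms by (simp only: m) simp
  also have "{k\<in>Hset s t q. k < m} = {k\<in>Hset s t q. int k \<le> M - 1}" by (auto simp: m)
  also have "M * ?c (M - 1) = M * \<lfloor>(of_int (s + (M - 1) * q) :: real) / of_int t\<rfloor>"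
    by (simp only: floor_divide_of_int_eq)
  finally show ?thesis by (simp add: right_diff_distrib mult.commute[of "M - 1"])
qed

lemma Hset_add_period:
  assumes "0 < t"
  shows "k + U * nat t \<in> Hset s t q \<longleftrightarrow> k \<in> Hset s t q"
proof -
  have "s + int (k + U * nat t) * q = (s + int k * q) + (int U * q) * t"
    using assms by (simp add: algebra_simps)
  then show ?thesis unfolding Hset_iff by (simp only: mod_mult_self1)
qed

lemma Hset_mod_period:
  assumes "0 < t"
  shows "k mod nat t \<in> Hset s t q \<longleftrightarrow> k \<in> Hset s t q"
  using Hset_add_period[OF assms, of "k mod nat t" "k div nat t"] by (simp add: mod_div_mult_eq)

lemma card_Jset:
  fixes s t q :: int
  assumes "0 < t" "coprime t q"
  shows "card (Jset s t q) = nat (q mod t)"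
proof -
  define g where "g k = (s + int k * q) mod t" for k
  let ?A = "{0..<nat t}"
  have inj: "inj_on g ?A"
  proof (rule inj_onI)
    fix a b assume a: "a \<in> ?A" and b: "b \<in> ?A" and "g a = g b"
    then have "t dvd (int a - int b) * q"
      unfolding g_def by (simp add: mod_eq_dvd_iff algebra_simps)
    then have "t dvd int a - int b" using assms(2) by (simp add: coprime_dvd_mult_left_iff)
    moreover have "\<bar>int a - int b\<bar> < t" using a b by auto
    ultimately show "a = b" using dvd_imp_le_int[of "int a - int b" t] by fastforce
  qed
  have "g ` ?A \<subseteq> {0..<t}" unfolding g_def using assms by auto
  moreover have "card (g ` ?A) = card {0..<t}" using card_image[OF inj] by simp
  ultimately have onto: "g ` ?A = {0..<t}" by (simp add: card_subset_eq)
  have J: "Jset s t q = {k \<in> ?A. g k < q mod t}"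
    unfolding Jset_def g_def by (auto simp: Hset_iff)
  have "g ` Jset s t q = {y \<in> g ` ?A. y < q mod t}" unfolding J by auto
  also have "\<dots> = {0..<q mod t}"
    unfolding onto using pos_mod_bound[OF assms(1), of q] by auto
  finally have "card (g ` Jset s t q) = nat (q mod t)" by simp
  moreover have "inj_on g (Jset s t q)" using inj unfolding J by (rule inj_on_subset) auto
  ultimately show ?thesis by (simp add: card_image)
qed

lemma Hset_below_Suc_periods:
  assumes "0 < t"
  shows "{k \<in> Hset s t q. k < Suc U * nat t}
           = {k \<in> Hset s t q. k < U * nat t} \<union> (\<lambda>j. j + U * nat t) ` Jset s t q"
proof (intro set_eqI iffI)
  fix k assume k: "k \<in> {k \<in> Hset s t q. k < Suc U * nat t}"
  show "k \<in> {k \<in> Hset s t q. k < U * nat t} \<union> (\<lambda>j. j + U * nat t) ` Jset s t q"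
  proof (cases "k < U * nat t")
    case False
    then have "k - U * nat t \<in> Jset s t q"
      using k Hset_add_period[OF assms, of "k - U * nat t" U s q] by (auto simp: Jset_def)
    moreover have "k = (k - U * nat t) + U * nat t" using False by simp
    ultimately show ?thesis by blast
  qed (use k in simp)
qed (auto simp: Jset_def Hset_add_period[OF assms])

lemma sum_Hset_below_periods:
  fixes s t q :: int
  assumes "0 < t"
  shows "(\<Sum>k\<in>{k \<in> Hset s t q. k < U * nat t}. int k)
           = int U * (\<Sum>k\<in>Jset s t q. int k)
             + int (card (Jset s t q)) * t * (((int U - 1) * int U) div 2)"
proof (induction U)
  case 0
  then show ?case by simp
next
  case (Suc U)
  let ?J = "Jset s t q"
  have fin: "finite ?J" by (simp add: Jset_def)
  have "(\<Sum>k\<in>(\<lambda>j. j + U * nat t) ` ?J. int k) = (\<Sum>j\<in>?J. int j + int U * t)"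
    using assms by (subst sum.reindex) (auto simp: inj_on_def)
  also have "\<dots> = (\<Sum>j\<in>?J. int j) + int (card ?J) * int U * t"
    by (simp add: sum.distrib)
  finally have block: "(\<Sum>k\<in>(\<lambda>j. j + U * nat t) ` ?J. int k)
                         = (\<Sum>j\<in>?J. int j) + int (card ?J) * int U * t" .
  have "(\<Sum>k\<in>{k \<in> Hset s t q. k < Suc U * nat t}. int k)
      = (\<Sum>k\<in>{k \<in> Hset s t q. k < U * nat t}. int k) + (\<Sum>k\<in>(\<lambda>j. j + U * nat t) ` ?J. int k)"
    unfolding Hset_below_Suc_periods[OF assms] using fin
    by (intro sum.union_disjoint) (auto simp: Jset_def)
  also have "\<dots> = int (Suc U) * (\<Sum>k\<in>?J. int k)
                   + int (card ?J) * t * (((int (Suc U) - 1) * int (Suc U)) div 2)"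
    using Suc.IH block triangle_step[of "int U"] by (simp add: algebra_simps)
  finally show ?case .
qed

lemma sum_Hset_atMost:
  fixes s t q b :: int
  assumes "0 < t" "coprime t q" "0 \<le> b"
  defines "u \<equiv> b div t"
  shows "(\<Sum>k\<in>{k \<in> Hset s t q. int k \<le> b}. int k)
           = u * (\<Sum>k\<in>Jset s t q. int k) + q mod t * t * (((u - 1) * u) div 2)
             + (\<Sum>k\<in>{k \<in> Hset s t q. u * t \<le> int k \<and> int k \<le> b}. int k)"
proof -
  obtain U where U: "u = int U"
    using nonneg_int_cases[of u] assms by (auto simp: u_def pos_imp_zdiv_nonneg_iff)
  have Ut: "int (U * nat t) = u * t" using U assms by simp
  then have below: "k < U * nat t \<longleftrightarrow> int k < u * t" for k by linarith
  have "u * t = b - b mod t" unfolding u_def by (simp add: minus_mod_eq_div_mult)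
  then have "u * t \<le> b" using assms by simp
  then have split: "{k \<in> Hset s t q. int k \<le> b}
      = {k \<in> Hset s t q. k < U * nat t} \<union> {k \<in> Hset s t q. u * t \<le> int k \<and> int k \<le> b}"
    by (auto simp: below)
  have "finite {k \<in> Hset s t q. int k \<le> b}" by (rule finite_subset[of _ "{..nat b}"]) auto
  then have "(\<Sum>k\<in>{k \<in> Hset s t q. int k \<le> b}. int k)
      = (\<Sum>k\<in>{k \<in> Hset s t q. k < U * nat t}. int k)
        + (\<Sum>k\<in>{k \<in> Hset s t q. u * t \<le> int k \<and> int k \<le> b}. int k)"
    unfolding split by (intro sum.union_disjoint) (auto simp: below)
  then show ?thesis
    using sum_Hset_below_periods[OF assms(1), of s q U] card_Jset[OF assms(1,2), of s] assms(1)
    by (simp add: U)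
qed

lemma Min_Jset_le_Hset:
  assumes "0 < t" "k \<in> Hset s t q"
  shows "Min (Jset s t q) \<le> k"
proof -
  have "k mod nat t \<in> Jset s t q"
    using assms Hset_mod_period[OF assms(1)] by (simp add: Jset_def)
  then have "Min (Jset s t q) \<le> k mod nat t" by (simp add: Jset_def)
  also have "\<dots> \<le> k" by simp
  finally show ?thesis .
qed

lemma Hset_atMost_eq_Jset:
  fixes M :: int
  assumes "0 < t" "int (Max (Jset s t q)) < M" "M \<le> int (Min (Jset s t q)) + t"
  shows "{k \<in> Hset s t q. int k \<le> M - 1} = Jset s t q"
proof (intro set_eqI iffI)
  fix k assume k: "k \<in> {k \<in> Hset s t q. int k \<le> M - 1}"
  show "k \<in> Jset s t q"
  proof (rule ccontr)
    assume "k \<notin> Jset s t q"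
    then have "nat t \<le> k" using k by (auto simp: Jset_def)
    then have "(k - nat t) + 1 * nat t \<in> Hset s t q" using k by simp
    then have "Min (Jset s t q) \<le> k - nat t"
      using Min_Jset_le_Hset[OF assms(1)] Hset_add_period[OF assms(1)] by blast
    moreover have "int (k - nat t) = int k - t" using \<open>nat t \<le> k\<close> assms(1) by simp
    moreover have "int k \<le> M - 1" using k by simp
    ultimately show False using assms(3) by linarith
  qed
next
  fix k assume k: "k \<in> Jset s t q"
  have "finite (Jset s t q)" by (simp add: Jset_def)
  then have "k \<le> Max (Jset s t q)" using k by simp
  then have "int k \<le> M - 1" using assms(2) by linarith
  then show "k \<in> {k \<in> Hset s t q. int k \<le> M - 1}" using k by (simp add: Jset_def)
qed

theorem theorem12:
  fixes s t q N :: int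
  assumes "0 \<le> s" "s < q" "1 \<le> t" "t < q" "N \<ge> 0" "\<not> t dvd q" "gcd t q = 1"
  shows "let qbar = q div t; qhat = q mod t;
             M = - ((s - N * t) div q);
             S = - qbar * (((M - 1) * M) div 2)
                 - M * (N - \<lfloor>(of_int (s + (M - 1) * q) :: real) / of_int t\<rfloor>);
             H = Hset s t q; J = Jset s t q;
             j0 = int (Min J); jlast = int (Max J)
         in (j0 \<ge> M \<longrightarrow> Sminus s t q N = S)
          \<and> (j0 < M \<and> M \<le> jlast \<longrightarrow>
               Sminus s t q N = S - (\<Sum>k\<in>{k\<in>H. int k \<le> M - 1}. int k))
          \<and> (jlast < M \<and> j0 + t \<ge> M \<longrightarrow>
               Sminus s t q N = S - (\<Sum>k\<in>J. int k))
          \<and> (jlast < M \<and> j0 + t < M \<longrightarrow>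
               (let u = (M - 1) div t in
                Sminus s t q N = S - u * (\<Sum>k\<in>J. int k) - qhat * t * (((u - 1) * u) div 2)
                   - (\<Sum>k\<in>{k\<in>H. u * t \<le> int k \<and> int k \<le> M - 1}. int k)))"
proof -
  have t: "0 < t" using assms(3) by simp
  have coprime: "coprime t q" using assms(7) by (simp add: coprime_iff_gcd_eq_1)
  define M where "M = - ((s - N * t) div q)"
  define S where "S = - (q div t) * (((M - 1) * M) div 2)
                 - M * (N - \<lfloor>(of_int (s + (M - 1) * q) :: real) / of_int t\<rfloor>)"
  define H where "H = Hset s t q"
  define J where "J = Jset s t q"
  define B where "B = (\<Sum>k\<in>{k \<in> H. int k \<le> M - 1}. int k)"
  have "Sminus s t q N = S - B"
    using Sminus_eq_Hset_sum[OF assms(1-3) _ assms(5)] assms(4)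
    by (simp add: M_def S_def H_def B_def)
  moreover have "B = 0" if "M \<le> int (Min J)"
    using that Min_Jset_le_Hset[OF t] unfolding B_def H_def J_def by (fastforce intro!: sum.neutral)
  moreover have "B = (\<Sum>k\<in>J. int k)" if "int (Max J) < M" "M \<le> int (Min J) + t"
    using Hset_atMost_eq_Jset[OF t] that unfolding B_def H_def J_def by simp
  moreover have "B = (M - 1) div t * (\<Sum>k\<in>J. int k)
      + q mod t * t * ((((M - 1) div t - 1) * ((M - 1) div t)) div 2)
      + (\<Sum>k\<in>{k \<in> H. (M - 1) div t * t \<le> int k \<and> int k \<le> M - 1}. int k)"
    if "int (Min J) + t < M"
    using sum_Hset_atMost[OF t coprime, of "M - 1" s] that t unfolding B_def H_def J_def by simp
  ultimately show ?thesis
    unfolding Let_def M_def[symmetric] S_def[symmetric] H_def[symmetric] J_def[symmetric]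
      B_def[symmetric]
    by auto
qed

end
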